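(* Let $e$ be a curve and $\delta>0$. Then each of the offsets $e_{-\delta}$ and $e_{+\delta}$ is monotone, i.e. meets every vertical line and every horizontal line in a connected set.
   Context: A curve is an open, bounded, piecewise-algebraic arc in $\mathbb{R}^2$ that is both $x$-monotone and $y$-monotone. For a point $a$ and a set $s$, $a<_y s$ means that $a$ and $s$ overlap in $x$ (some $q\in s$ has $q_x=a_x$) and $a_y<q_y$ for every $q\in s$ with $q_x=a_x$; $a>_y s$ is defined symmetrically. ${\rm dist}(a,e)=\inf_{q\in e}|a-q|$. The $\delta$-offsets of $e$ are $e_{-\delta}=\{a: a<_y e,\ {\rm dist}(a,e)=\delta\}$ and $e_{+\delta}=\{a: a>_y e,\ {\rm dist}(a,e)=\delta\}$. *)

theory Defs
  imports "HOL-Analysis.Analysis"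
begin

type_synonym pt = "real \<times> real"

definition bipoly_eval :: "nat \<Rightarrow> (nat \<Rightarrow> nat \<Rightarrow> real) \<Rightarrow> pt \<Rightarrow> real" where
  "bipoly_eval N c p = (\<Sum>i\<le>N. \<Sum>j\<le>N. c i j * fst p ^ i * snd p ^ j)"

definition in_algebraic_curve :: "pt set \<Rightarrow> bool" where
  "in_algebraic_curve S \<longleftrightarrow>
     (\<exists>N c. (\<exists>i\<le>N. \<exists>j\<le>N. c i j \<noteq> 0) \<and> (\<forall>p\<in>S. bipoly_eval N c p = 0))"

definition pw_algebraic_open_arc :: "pt set \<Rightarrow> bool" where
  "pw_algebraic_open_arc e \<longleftrightarrow>
     (\<exists>\<gamma> :: real \<Rightarrow> pt. continuous_on {0<..<1} \<gamma> \<and> inj_on \<gamma> {0<..<1} \<and>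
        e = \<gamma> ` {0<..<1} \<and>
        (\<exists>k t. t 0 = (0::real) \<and> t k = 1 \<and> (\<forall>i<k. t i < t (Suc i)) \<and>
           (\<forall>i<k. in_algebraic_curve (\<gamma> ` ({t i..t (Suc i)} \<inter> {0<..<1})))))"

definition x_monotone :: "pt set \<Rightarrow> bool" where
  "x_monotone S \<longleftrightarrow> (\<forall>c. connected (S \<inter> {p. fst p = c}))"

definition y_monotone :: "pt set \<Rightarrow> bool" where
  "y_monotone S \<longleftrightarrow> (\<forall>c. connected (S \<inter> {p. snd p = c}))"

definition monotone_set :: "pt set \<Rightarrow> bool" where
  "monotone_set S \<longleftrightarrow> x_monotone S \<and> y_monotone S"

definition is_curve :: "pt set \<Rightarrow> bool" where
  "is_curve e \<longleftrightarrow> pw_algebraic_open_arc e \<and> bounded e \<and> x_monotone e \<and> y_monotone e"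

definition below_y :: "pt \<Rightarrow> pt set \<Rightarrow> bool" where
  "below_y a s \<longleftrightarrow> (\<exists>q\<in>s. fst q = fst a) \<and> (\<forall>q\<in>s. fst q = fst a \<longrightarrow> snd a < snd q)"

definition above_y :: "pt \<Rightarrow> pt set \<Rightarrow> bool" where
  "above_y a s \<longleftrightarrow> (\<exists>q\<in>s. fst q = fst a) \<and> (\<forall>q\<in>s. fst q = fst a \<longrightarrow> snd a > snd q)"

definition offset_minus :: "pt set \<Rightarrow> real \<Rightarrow> pt set" where
  "offset_minus e \<delta> = {a. below_y a e \<and> infdist a e = \<delta>}"

definition offset_plus :: "pt set \<Rightarrow> real \<Rightarrow> pt set" where
  "offset_plus e \<delta> = {a. above_y a e \<and> infdist a e = \<delta>}"

end

theory Submission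
  imports Defs
begin

text \<open>An algebraic piece contains a whole segment of only finitely many
  vertical or horizontal lines, so all but finitely many sections are single points; by the
  intermediate value theorem both coordinates of the parametrisation are then monotone, i.e.\ the
  curve is a chain for the componentwise order, increasing or decreasing. For an increasing chain,
  the distance from a point below the curve decreases as the point moves up and increases as it
  moves right, so the vertical and horizontal sections of the lower offset are intervals.
  Reflections in the coordinate axes reduce the decreasing case and the upper offset to this one.\<close>

lemma bipoly_eval_swap: "bipoly_eval N c (prod.swap p) = bipoly_eval N (\<lambda>i j. c j i) p"
  unfolding bipoly_eval_def by (subst sum.swap) (simp add: mult_ac)

lemma bipoly_eval_as_poly_in_snd:
  "bipoly_eval N c (a, y) = (\<Sum>j\<le>N. (\<Sum>i\<le>N. c i j * a ^ i) * y ^ j)"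
  unfolding bipoly_eval_def by (subst sum.swap) (simp add: sum_distrib_right)

lemma finite_infinite_fst_fibres_bipoly_zeros:
  assumes "\<exists>i\<le>N. \<exists>j\<le>N. c i j \<noteq> 0"
  shows "finite {a. infinite {p. bipoly_eval N c p = 0 \<and> fst p = a}}"
proof -
  obtain i0 j0 where ij: "i0 \<le> N" "j0 \<le> N" "c i0 j0 \<noteq> 0" using assms by auto
  have "{a. infinite {p. bipoly_eval N c p = 0 \<and> fst p = a}} \<subseteq> {a. (\<Sum>i\<le>N. c i j0 * a ^ i) = 0}"
  proof (intro subsetI, unfold mem_Collect_eq)
    fix a assume "infinite {p. bipoly_eval N c p = 0 \<and> fst p = a}" (is "infinite ?F")
    have "{p. bipoly_eval N c p = 0 \<and> fst p = a}
        \<subseteq> Pair a ` {y. (\<Sum>j\<le>N. (\<Sum>i\<le>N. c i j * a ^ i) * y ^ j) = 0}"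
    proof
      fix p assume "p \<in> {p. bipoly_eval N c p = 0 \<and> fst p = a}"
      then have "p = Pair a (snd p)" "bipoly_eval N c (a, snd p) = 0" by auto
      then show "p \<in> Pair a ` {y. (\<Sum>j\<le>N. (\<Sum>i\<le>N. c i j * a ^ i) * y ^ j) = 0}"
        unfolding bipoly_eval_as_poly_in_snd by (intro image_eqI) auto
    qed
    then have "infinite {y. (\<Sum>j\<le>N. (\<Sum>i\<le>N. c i j * a ^ i) * y ^ j) = 0}"
      using \<open>infinite ?F\<close> finite_subset finite_imageI by blast
    then show "(\<Sum>i\<le>N. c i j0 * a ^ i) = 0"
      unfolding polyfun_finite_roots using ij(2) by auto
  qed
  moreover have "finite {a. (\<Sum>i\<le>N. c i j0 * a ^ i) = 0}"
    using polyfun_finite_roots[of "\<lambda>i. c i j0" N] ij by auto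
  ultimately show ?thesis by (rule finite_subset)
qed

lemma in_algebraic_curve_swap:
  assumes "in_algebraic_curve S"
  shows "in_algebraic_curve (prod.swap ` S)"
proof -
  obtain N c where c: "\<exists>i\<le>N. \<exists>j\<le>N. c i j \<noteq> 0" and S: "\<forall>p\<in>S. bipoly_eval N c p = 0"
    using assms unfolding in_algebraic_curve_def by blast
  have coeff: "\<exists>i\<le>N. \<exists>j\<le>N. c j i \<noteq> 0"
    using c by auto
  have zero: "\<forall>p\<in>prod.swap ` S. bipoly_eval N (\<lambda>i j. c j i) p = 0"
  proof
    fix p assume "p \<in> prod.swap ` S"
    then obtain q where "q \<in> S" "p = prod.swap q" by blast
    then show "bipoly_eval N (\<lambda>i j. c j i) p = 0"
      using S bipoly_eval_swap[of N "\<lambda>i j. c j i" q] by simp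
  qed
  show ?thesis
    unfolding in_algebraic_curve_def by (intro exI[of _ N] exI[of _ "\<lambda>i j. c j i"] conjI coeff zero)
qed

lemma in_algebraic_curve_finite_infinite_fst_fibres:
  assumes "in_algebraic_curve S"
  shows "finite {a. infinite (S \<inter> {p. fst p = a})}"
proof -
  obtain N c where c: "\<exists>i\<le>N. \<exists>j\<le>N. c i j \<noteq> 0" and S: "\<forall>p\<in>S. bipoly_eval N c p = 0"
    using assms unfolding in_algebraic_curve_def by blast
  have "S \<inter> {p. fst p = a} \<subseteq> {p. bipoly_eval N c p = 0 \<and> fst p = a}" for a
    using S by auto
  then have "{a. infinite (S \<inter> {p. fst p = a})} \<subseteq> {a. infinite {p. bipoly_eval N c p = 0 \<and> fst p = a}}"
    using finite_subset by blast
  then show ?thesis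
    using finite_infinite_fst_fibres_bipoly_zeros[OF c] finite_subset by blast
qed

lemma in_algebraic_curve_finite_infinite_snd_fibres:
  assumes "in_algebraic_curve S"
  shows "finite {a. infinite (S \<inter> {p. snd p = a})}"
proof -
  have "prod.swap ` (S \<inter> {p. snd p = a}) = prod.swap ` S \<inter> {p. fst p = a}" for a
    by auto
  then have "finite (S \<inter> {p. snd p = a}) \<longleftrightarrow> finite (prod.swap ` S \<inter> {p. fst p = a})" for a
    by (metis finite_image_iff inj_swap)
  then show ?thesis
    using in_algebraic_curve_finite_infinite_fst_fibres[OF in_algebraic_curve_swap[OF assms]]
    by simp
qed

lemma finite_infinite_fibres_UN:
  assumes "S \<subseteq> (\<Union>i\<in>I. A i)" "finite I"
    and "\<And>i. i \<in> I \<Longrightarrow> finite {a. infinite (A i \<inter> {p. g p = a})}"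
  shows "finite {a. infinite (S \<inter> {p. g p = a})}"
proof -
  have "{a. infinite (S \<inter> {p. g p = a})} \<subseteq> (\<Union>i\<in>I. {a. infinite (A i \<inter> {p. g p = a})})"
  proof (intro subsetI, unfold mem_Collect_eq)
    fix a assume "infinite (S \<inter> {p. g p = a})"
    moreover have "S \<inter> {p. g p = a} \<subseteq> (\<Union>i\<in>I. A i \<inter> {p. g p = a})" using assms(1) by blast
    ultimately have "infinite (\<Union>i\<in>I. A i \<inter> {p. g p = a})" using finite_subset by blast
    then show "a \<in> (\<Union>i\<in>I. {a. infinite (A i \<inter> {p. g p = a})})"
      using \<open>finite I\<close> by blast
  qed
  moreover have "finite (\<Union>i\<in>I. {a. infinite (A i \<inter> {p. g p = a})})"
    using assms(2,3) by blast
  ultimately show ?thesis by (rule finite_subset)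
qed

lemma subdivision_covers:
  fixes t :: "nat \<Rightarrow> real"
  assumes "t 0 \<le> s" "s < t k"
  obtains i where "i < k" "t i \<le> s" "s \<le> t (Suc i)"
proof -
  define i where "i = Max {i. i \<le> k \<and> t i \<le> s}"
  have fin: "finite {i. i \<le> k \<and> t i \<le> s}" by simp
  have "i \<in> {i. i \<le> k \<and> t i \<le> s}" unfolding i_def
    using assms(1) by (intro Max_in fin) auto
  moreover have "Suc i \<notin> {i. i \<le> k \<and> t i \<le> s}"
    using Max_ge[OF fin] unfolding i_def[symmetric] by fastforce
  ultimately show ?thesis
    using assms(2) by (intro that[of i]) (auto simp: not_less_eq_eq nat_less_le)
qed

lemma pw_algebraic_open_arc_finite_infinite_fibres:
  assumes "pw_algebraic_open_arc e" "g = fst \<or> g = snd"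
  shows "finite {a. infinite (e \<inter> {p. g p = a})}"
proof -
  obtain \<gamma> k t where e: "e = \<gamma> ` {0<..<1}" and t: "t 0 = (0::real)" "t k = 1"
    and alg: "\<forall>i<k. in_algebraic_curve (\<gamma> ` ({t i..t (Suc i)} \<inter> {0<..<1}))"
    using assms(1) unfolding pw_algebraic_open_arc_def by blast
  have cover: "e \<subseteq> (\<Union>i<k. \<gamma> ` ({t i..t (Suc i)} \<inter> {0<..<1}))"
  proof
    fix p assume "p \<in> e"
    then obtain s where s: "s \<in> {0<..<1}" "p = \<gamma> s" using e by auto
    then obtain i where "i < k" "t i \<le> s" "s \<le> t (Suc i)"
      using subdivision_covers[of t s k] t by auto
    then show "p \<in> (\<Union>i<k. \<gamma> ` ({t i..t (Suc i)} \<inter> {0<..<1}))"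
      using s by (intro UN_I[of i]) auto
  qed
  have "finite {a. infinite (\<gamma> ` ({t i..t (Suc i)} \<inter> {0<..<1}) \<inter> {p. g p = a})}"
    if "i < k" for i
    using assms(2) alg that
    by (elim disjE) (simp_all add: in_algebraic_curve_finite_infinite_fst_fibres
        in_algebraic_curve_finite_infinite_snd_fibres)
  then show ?thesis by (intro finite_infinite_fibres_UN[OF cover]) auto
qed

lemma between_imp_mono_on_or_antimono_on:
  fixes f :: "real \<Rightarrow> real"
  assumes between: "\<And>s1 s2 s3. s1 \<in> I \<Longrightarrow> s2 \<in> I \<Longrightarrow> s3 \<in> I \<Longrightarrow>
      s1 < s2 \<Longrightarrow> s2 < s3 \<Longrightarrow> min (f s1) (f s3) \<le> f s2 \<and> f s2 \<le> max (f s1) (f s3)"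
  shows "mono_on I f \<or> antimono_on I f"
proof (rule ccontr)
  assume "\<not> (mono_on I f \<or> antimono_on I f)"
  then obtain u v a b where uv: "u \<in> I" "v \<in> I" "u < v" "f v < f u"
    and ab: "a \<in> I" "b \<in> I" "a < b" "f a < f b"
    unfolding monotone_on_def by (metis not_le order_le_less)
  show False
    using uv ab between[of u v a] between[of u v b] between[of u a v] between[of u a b]
      between[of u b v] between[of u b a] between[of v u a] between[of v u b] between[of v a u]
      between[of v a b] between[of v b u] between[of v b a] between[of a u v] between[of a u b]
      between[of a v u] between[of a v b] between[of a b u] between[of a b v] between[of b u v]
      between[of b u a] between[of b v u] between[of b v a] between[of b a u] between[of b a v]
    \<comment> \<open>whatever the relative order of \<open>u, v, a, b\<close>, some triple among them violates betweenness\<close>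
    by (smt (verit))
qed

lemma IVT_min_max:
  fixes f :: "real \<Rightarrow> real"
  assumes "a \<le> b" "continuous_on {a..b} f" "min (f a) (f b) \<le> c" "c \<le> max (f a) (f b)"
  shows "\<exists>u. a \<le> u \<and> u \<le> b \<and> f u = c"
  using IVT'[of f a c b] IVT2'[of f b c a] assms by (cases "f a \<le> f b") auto

lemma connected_infinite_if_two_points:
  fixes S :: "'a::metric_space set"
  assumes "connected S" "x \<in> S" "y \<in> S" "x \<noteq> y"
  shows "infinite S"
  using assms connected_finite_iff_sing by fastforce

lemma continuous_injective_between:
  fixes \<gamma> :: "real \<Rightarrow> 'a::metric_space" and g :: "'a \<Rightarrow> real"
  assumes I: "is_interval I" and \<gamma>: "continuous_on I \<gamma>" "inj_on \<gamma> I" and g: "continuous_on (\<gamma> ` I) g"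
    and fibres_connected: "\<And>c. connected (\<gamma> ` I \<inter> {p. g p = c})"
    and fibres_finite: "finite {c. infinite (\<gamma> ` I \<inter> {p. g p = c})}"
    and s: "s1 \<in> I" "s3 \<in> I" "s1 < s2" "s2 < s3"
  shows "min (g (\<gamma> s1)) (g (\<gamma> s3)) \<le> g (\<gamma> s2) \<and> g (\<gamma> s2) \<le> max (g (\<gamma> s1)) (g (\<gamma> s3))"
proof -
  define f where "f = g \<circ> \<gamma>"
  have sub: "{s1..s3} \<subseteq> I"
    using I s unfolding is_interval_1 by (meson atLeastAtMost_iff subsetI)
  have f_cont: "continuous_on {s1..s3} f"
    unfolding f_def using \<gamma>(1) g sub by (meson continuous_on_compose continuous_on_subset image_mono)
  have infinite_fibre: "c \<in> {c. infinite (\<gamma> ` I \<inter> {p. g p = c})}"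
    if c: "min (f s1) (f s2) \<le> c" "c \<le> max (f s1) (f s2)"
      "min (f s2) (f s3) \<le> c" "c \<le> max (f s2) (f s3)" "c \<noteq> f s2" for c
  proof -
    obtain u where u: "s1 \<le> u" "u \<le> s2" "f u = c"
      using IVT_min_max[of s1 s2 f c] continuous_on_subset[OF f_cont] c s by auto
    obtain v where v: "s2 \<le> v" "v \<le> s3" "f v = c"
      using IVT_min_max[of s2 s3 f c] continuous_on_subset[OF f_cont] c s by auto
    have uv: "u \<in> I" "v \<in> I" using u v sub s by auto
    have "u \<noteq> v" using u v \<open>c \<noteq> f s2\<close> by auto
    then have "\<gamma> u \<noteq> \<gamma> v" using uv inj_onD[OF \<gamma>(2)] by blast
    moreover have "\<gamma> u \<in> \<gamma> ` I \<inter> {p. g p = c}" "\<gamma> v \<in> \<gamma> ` I \<inter> {p. g p = c}"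
      using u v uv by (auto simp: f_def)
    ultimately show ?thesis
      using connected_infinite_if_two_points[OF fibres_connected] by blast
  qed
  show ?thesis
  proof (rule ccontr)
    assume "\<not> ?thesis"
    then have "f s2 < min (f s1) (f s3) \<or> max (f s1) (f s3) < f s2" unfolding f_def by auto
    then obtain l r where "l < r" "{l<..<r} \<subseteq> {c. infinite (\<gamma> ` I \<inter> {p. g p = c})}"
    proof
      assume "f s2 < min (f s1) (f s3)"
      moreover have "{f s2<..<min (f s1) (f s3)} \<subseteq> {c. infinite (\<gamma> ` I \<inter> {p. g p = c})}"
        using infinite_fibre by auto
      ultimately show thesis by (rule that)
    next
      assume "max (f s1) (f s3) < f s2"
      moreover have "{max (f s1) (f s3)<..<f s2} \<subseteq> {c. infinite (\<gamma> ` I \<inter> {p. g p = c})}"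
        using infinite_fibre by auto
      ultimately show thesis by (rule that)
    qed
    then show False using fibres_finite finite_subset infinite_Ioo by blast
  qed
qed

lemma continuous_injective_mono_on_or_antimono_on:
  fixes \<gamma> :: "real \<Rightarrow> 'a::metric_space" and g :: "'a \<Rightarrow> real"
  assumes "is_interval I" "continuous_on I \<gamma>" "inj_on \<gamma> I" "continuous_on (\<gamma> ` I) g"
    and "\<And>c. connected (\<gamma> ` I \<inter> {p. g p = c})"
    and "finite {c. infinite (\<gamma> ` I \<inter> {p. g p = c})}"
  shows "mono_on I (g \<circ> \<gamma>) \<or> antimono_on I (g \<circ> \<gamma>)"
  using continuous_injective_between[OF assms]
  by (intro between_imp_mono_on_or_antimono_on) simp

definition inc_chain :: "pt set \<Rightarrow> bool" where
  "inc_chain S \<longleftrightarrow>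
    (\<forall>p\<in>S. \<forall>q\<in>S. (fst p \<le> fst q \<and> snd p \<le> snd q) \<or> (fst q \<le> fst p \<and> snd q \<le> snd p))"

definition dec_chain :: "pt set \<Rightarrow> bool" where
  "dec_chain S \<longleftrightarrow>
    (\<forall>p\<in>S. \<forall>q\<in>S. (fst p \<le> fst q \<and> snd q \<le> snd p) \<or> (fst q \<le> fst p \<and> snd p \<le> snd q))"

lemma image_total_if_ordered:
  fixes \<gamma> :: "'a::linorder \<Rightarrow> 'b"
  assumes "\<And>u v. u \<in> I \<Longrightarrow> v \<in> I \<Longrightarrow> u \<le> v \<Longrightarrow> R (\<gamma> u) (\<gamma> v)"
  shows "\<forall>p\<in>\<gamma> ` I. \<forall>q\<in>\<gamma> ` I. R p q \<or> R q p"
proof (intro ballI)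
  fix p q assume "p \<in> \<gamma> ` I" "q \<in> \<gamma> ` I"
  then obtain u v where "u \<in> I" "v \<in> I" "p = \<gamma> u" "q = \<gamma> v" by blast
  then show "R p q \<or> R q p" using assms by (cases "u \<le> v") auto
qed

lemma monotone_coordinates_imp_chain:
  fixes \<gamma> :: "'a::linorder \<Rightarrow> pt"
  assumes "mono_on I (fst \<circ> \<gamma>) \<or> antimono_on I (fst \<circ> \<gamma>)"
    and "mono_on I (snd \<circ> \<gamma>) \<or> antimono_on I (snd \<circ> \<gamma>)"
  shows "inc_chain (\<gamma> ` I) \<or> dec_chain (\<gamma> ` I)"
  using assms
proof (elim disjE)
  assume "mono_on I (fst \<circ> \<gamma>)" "mono_on I (snd \<circ> \<gamma>)"
  then have "\<forall>p\<in>\<gamma> ` I. \<forall>q\<in>\<gamma> ` I. (fst p \<le> fst q \<and> snd p \<le> snd q) \<or> (fst q \<le> fst p \<and> snd q \<le> snd p)"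
    by (intro image_total_if_ordered) (auto simp: monotone_on_def)
  then show ?thesis unfolding inc_chain_def by blast
next
  assume "mono_on I (fst \<circ> \<gamma>)" "antimono_on I (snd \<circ> \<gamma>)"
  then have "\<forall>p\<in>\<gamma> ` I. \<forall>q\<in>\<gamma> ` I. (fst p \<le> fst q \<and> snd q \<le> snd p) \<or> (fst q \<le> fst p \<and> snd p \<le> snd q)"
    by (intro image_total_if_ordered) (auto simp: monotone_on_def)
  then show ?thesis unfolding dec_chain_def by blast
next
  assume "antimono_on I (fst \<circ> \<gamma>)" "mono_on I (snd \<circ> \<gamma>)"
  then have "\<forall>p\<in>\<gamma> ` I. \<forall>q\<in>\<gamma> ` I. (fst q \<le> fst p \<and> snd p \<le> snd q) \<or> (fst p \<le> fst q \<and> snd q \<le> snd p)"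
    by (intro image_total_if_ordered) (auto simp: monotone_on_def)
  then show ?thesis unfolding dec_chain_def by blast
next
  assume "antimono_on I (fst \<circ> \<gamma>)" "antimono_on I (snd \<circ> \<gamma>)"
  then have "\<forall>p\<in>\<gamma> ` I. \<forall>q\<in>\<gamma> ` I. (fst q \<le> fst p \<and> snd q \<le> snd p) \<or> (fst p \<le> fst q \<and> snd p \<le> snd q)"
    by (intro image_total_if_ordered) (auto simp: monotone_on_def)
  then show ?thesis unfolding inc_chain_def by blast
qed

lemma dist_le_dist_if_components_le:
  fixes a b c d :: "real \<times> real"
  assumes "\<bar>fst a - fst b\<bar> \<le> \<bar>fst c - fst d\<bar>" "\<bar>snd a - snd b\<bar> \<le> \<bar>snd c - snd d\<bar>"
  shows "dist a b \<le> dist c d"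
  unfolding dist_prod_def dist_real_def
  by (intro real_sqrt_le_mono add_mono power_mono) (use assms in auto)

lemma infdist_le_infdist_if_closer:
  assumes "S \<noteq> {}" "\<And>q. q \<in> S \<Longrightarrow> \<exists>r\<in>S. dist a r \<le> dist b q"
  shows "infdist a S \<le> infdist b S"
  unfolding infdist_notempty[OF assms(1)]
  by (rule cINF_mono) (use assms in auto)

lemma connected_ivt:
  fixes f :: "'a::topological_space \<Rightarrow> real"
  assumes "connected S" "continuous_on S f" "p \<in> S" "q \<in> S" "f p \<le> c" "c \<le> f q"
  shows "\<exists>r\<in>S. f r = c"
proof -
  have "is_interval (f ` S)"
    using assms(1,2) connected_continuous_image is_interval_connected_1 by blast
  then have "c \<in> f ` S" using assms(3-6) unfolding is_interval_1 by blast
  then show ?thesis by blast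
qed

lemma inc_chain_swap: "inc_chain (prod.swap ` S) \<longleftrightarrow> inc_chain S"
  unfolding inc_chain_def by auto

lemma inc_chain_level_between:
  assumes "inc_chain S" "connected S" "q \<in> S" "p \<in> S"
    and "snd q \<le> h" "h \<le> snd p" "fst q \<le> fst p"
  shows "\<exists>r\<in>S. snd r = h \<and> fst q \<le> fst r \<and> fst r \<le> fst p"
proof -
  obtain r where r: "r \<in> S" "snd r = h"
    using connected_ivt[OF assms(2) _ assms(3,4,5,6)] continuous_on_snd continuous_on_id by blast
  consider "snd r = snd q" | "snd r = snd p" | "snd q < snd r" "snd r < snd p"
    using r assms(5,6) by linarith
  then show ?thesis
  proof cases
    case 1
    then show ?thesis using r assms(3,7) by auto
  next
    case 2
    then show ?thesis using r assms(4,7) by auto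
  next
    case 3
    then have "fst q \<le> fst r" "fst r \<le> fst p"
      using assms(1,3,4) r(1) unfolding inc_chain_def by (meson not_le)+
    then show ?thesis using r by blast
  qed
qed

lemma inc_chain_column_between:
  assumes "inc_chain S" "connected S" "q \<in> S" "p \<in> S"
    and "fst q \<le> h" "h \<le> fst p" "snd q \<le> snd p"
  shows "\<exists>r\<in>S. fst r = h \<and> snd q \<le> snd r \<and> snd r \<le> snd p"
proof -
  have "connected (prod.swap ` S)"
    using assms(2) by (intro connected_continuous_image) (auto intro: continuous_intros)
  then obtain r where "prod.swap r \<in> prod.swap ` S" "fst r = h" "snd q \<le> snd r" "snd r \<le> snd p"
    using inc_chain_level_between[of "prod.swap ` S" "prod.swap q" "prod.swap p" h] assms
    by (auto simp: inc_chain_swap)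
  then show ?thesis by (metis image_iff swap_swap)
qed

lemma inc_chain_infdist_antimono_below:
  assumes chain: "inc_chain S" "connected S"
    and p: "p \<in> S" "fst p = c" "y < snd p" and y': "y' \<le> y"
  shows "infdist (c, y) S \<le> infdist (c, y') S"
proof (rule infdist_le_infdist_if_closer)
  show "S \<noteq> {}" using p by auto
next
  fix q assume q: "q \<in> S"
  show "\<exists>r\<in>S. dist (c, y) r \<le> dist (c, y') q"
  proof (cases "y \<le> snd q")
    case True
    then show ?thesis
      using y' by (intro bexI[OF _ q] dist_le_dist_if_components_le) auto
  next
    case below: False
    \<comment> \<open>lift \<open>q\<close> by \<open>y - y'\<close>; unless \<open>p\<close> is already that low,
      \<open>S\<close> meets the lifted height between \<open>q\<close> and \<open>p\<close>\<close>
    define h where "h = snd q + (y - y')"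
    show ?thesis
    proof (cases "snd p \<le> h")
      case True
      then show ?thesis
        using below y' p by (intro bexI[OF _ p(1)] dist_le_dist_if_components_le) (auto simp: h_def)
    next
      case False
      have "fst q \<le> fst p"
        using chain(1) p q below unfolding inc_chain_def by force
      then obtain r where r: "r \<in> S" "snd r = h" "fst q \<le> fst r" "fst r \<le> fst p"
        using inc_chain_level_between[OF chain q p(1), of h] False y' by (auto simp: h_def)
      then show ?thesis
        using p below y' by (intro bexI[OF _ r(1)] dist_le_dist_if_components_le) (auto simp: h_def)
    qed
  qed
qed

lemma inc_chain_infdist_mono_right_below:
  assumes chain: "inc_chain S" "connected S"
    and p: "p \<in> S" "fst p = x" "c < snd p" and x': "x \<le> x'"
  shows "infdist (x, c) S \<le> infdist (x', c) S"
proof (rule infdist_le_infdist_if_closer)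
  show "S \<noteq> {}" using p by auto
next
  fix q assume q: "q \<in> S"
  show "\<exists>r\<in>S. dist (x, c) r \<le> dist (x', c) q"
  proof (cases "fst q \<le> x")
    case True
    then show ?thesis
      using x' by (intro bexI[OF _ q] dist_le_dist_if_components_le) auto
  next
    case right: False
    then have pq: "snd p \<le> snd q"
      using chain(1) p q unfolding inc_chain_def by force
    \<comment> \<open>shift \<open>q\<close> left by \<open>x' - x\<close>; unless that passes \<open>p\<close>,
      \<open>S\<close> meets the shifted column between \<open>p\<close> and \<open>q\<close>\<close>
    define k where "k = fst q - (x' - x)"
    show ?thesis
    proof (cases "k \<le> x")
      case True
      then show ?thesis
        using right x' p pq by (intro bexI[OF _ p(1)] dist_le_dist_if_components_le) (auto simp: k_def)
    next
      case False
      then obtain r where r: "r \<in> S" "fst r = k" "snd p \<le> snd r" "snd r \<le> snd q"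
        using inc_chain_column_between[OF chain p(1) q, of k] x' p pq by (auto simp: k_def)
      then show ?thesis
        using p right x' by (intro bexI[OF _ r(1)] dist_le_dist_if_components_le) (auto simp: k_def)
    qed
  qed
qed

lemma connected_fst_section:
  assumes "is_interval {y. (c, y) \<in> S}"
  shows "connected (S \<inter> {p. fst p = c})"
proof -
  have "S \<inter> {p. fst p = c} = Pair c ` {y. (c, y) \<in> S}" by force
  moreover have "continuous_on {y. (c, y) \<in> S} (Pair c)" by (intro continuous_intros)
  ultimately show ?thesis
    using assms connected_continuous_image is_interval_connected by metis
qed

lemma connected_snd_section:
  assumes "is_interval {x. (x, c) \<in> S}"
  shows "connected (S \<inter> {p. snd p = c})"
proof -
  have "S \<inter> {p. snd p = c} = (\<lambda>x. (x, c)) ` {x. (x, c) \<in> S}" by force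
  moreover have "continuous_on {x. (x, c) \<in> S} (\<lambda>x. (x, c))" by (intro continuous_intros)
  ultimately show ?thesis
    using assms connected_continuous_image is_interval_connected by metis
qed

lemma inc_chain_offset_minus_x_monotone:
  assumes chain: "inc_chain S" "connected S"
  shows "x_monotone (offset_minus S \<delta>)"
  unfolding x_monotone_def
proof
  fix c
  show "connected (offset_minus S \<delta> \<inter> {p. fst p = c})"
  proof (rule connected_fst_section, unfold is_interval_1, intro ballI allI impI)
    fix y1 y2 y
    assume "y1 \<in> {y. (c, y) \<in> offset_minus S \<delta>}" "y2 \<in> {y. (c, y) \<in> offset_minus S \<delta>}"
      and "y1 \<le> y \<and> y \<le> y2"
    then have y: "y1 \<le> y" "y \<le> y2" by auto
    from \<open>y1 \<in> _\<close> \<open>y2 \<in> _\<close> have y1: "infdist (c, y1) S = \<delta>"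
      and y2: "below_y (c, y2) S" "infdist (c, y2) S = \<delta>"
      unfolding offset_minus_def by auto
    obtain p where p: "p \<in> S" "fst p = c" "y2 < snd p"
      using y2(1) unfolding below_y_def by auto
    have below: "below_y (c, y) S"
      using y2(1) y(2) unfolding below_y_def by force
    have "infdist (c, y) S \<le> infdist (c, y1) S"
      using inc_chain_infdist_antimono_below[OF chain p(1,2)] p(3) y by simp
    moreover have "infdist (c, y2) S \<le> infdist (c, y) S"
      using inc_chain_infdist_antimono_below[OF chain p(1,2,3)] y by simp
    ultimately show "y \<in> {y. (c, y) \<in> offset_minus S \<delta>}"
      using below y1 y2 unfolding offset_minus_def by simp
  qed
qed

lemma inc_chain_offset_minus_y_monotone:
  assumes chain: "inc_chain S" "connected S"
  shows "y_monotone (offset_minus S \<delta>)"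
  unfolding y_monotone_def
proof
  fix c
  show "connected (offset_minus S \<delta> \<inter> {p. snd p = c})"
  proof (rule connected_snd_section, unfold is_interval_1, intro ballI allI impI)
    fix x1 x2 x
    assume "x1 \<in> {x. (x, c) \<in> offset_minus S \<delta>}" "x2 \<in> {x. (x, c) \<in> offset_minus S \<delta>}"
      and "x1 \<le> x \<and> x \<le> x2"
    then have x: "x1 \<le> x" "x \<le> x2" by auto
    from \<open>x1 \<in> _\<close> \<open>x2 \<in> _\<close> have x1: "below_y (x1, c) S" "infdist (x1, c) S = \<delta>"
      and x2: "below_y (x2, c) S" "infdist (x2, c) S = \<delta>"
      unfolding offset_minus_def by auto
    obtain p1 where p1: "p1 \<in> S" "fst p1 = x1" "c < snd p1"
      using x1(1) unfolding below_y_def by auto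
    obtain p2 where p2: "p2 \<in> S" "fst p2 = x2"
      using x2(1) unfolding below_y_def by auto
    obtain q where q: "q \<in> S" "fst q = x"
      using connected_ivt[OF chain(2) continuous_on_fst[OF continuous_on_id] p1(1) p2(1), of x]
        p1 p2 x by auto
    have above_c: "c < snd r" if "r \<in> S" "fst r = x" for r
    proof (cases "x = x1")
      case True
      then show ?thesis using x1(1) that unfolding below_y_def by auto
    next
      case False
      then have "snd p1 \<le> snd r"
        using chain(1) p1 that x unfolding inc_chain_def by force
      then show ?thesis using p1 by simp
    qed
    then have below: "below_y (x, c) S"
      using q unfolding below_y_def by auto
    have "infdist (x1, c) S \<le> infdist (x, c) S"
      using inc_chain_infdist_mono_right_below[OF chain p1] x by simp
    moreover have "infdist (x, c) S \<le> infdist (x2, c) S"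
      using inc_chain_infdist_mono_right_below[OF chain q above_c[OF q]] x by simp
    ultimately show "x \<in> {x. (x, c) \<in> offset_minus S \<delta>}"
      using below x1 x2 unfolding offset_minus_def by simp
  qed
qed

lemma continuous_on_map_prod:
  assumes "continuous_on UNIV f" "continuous_on UNIV g"
  shows "continuous_on A (map_prod f g)"
proof -
  have "continuous_on A (\<lambda>p. (f (fst p), g (snd p)))"
    using continuous_on_compose2[OF assms(1) continuous_on_fst[OF continuous_on_id]]
      continuous_on_compose2[OF assms(2) continuous_on_snd[OF continuous_on_id]]
    by (intro continuous_on_Pair) auto
  then show ?thesis by (simp add: map_prod_def case_prod_beta')
qed

lemma monotone_set_map_prod:
  fixes f g :: "real \<Rightarrow> real"
  assumes "bij f" "bij g" "continuous_on UNIV f" "continuous_on UNIV g" "monotone_set S"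
  shows "monotone_set (map_prod f g ` S)"
proof -
  note cont = continuous_on_map_prod[OF assms(3,4)]
  have "map_prod f g ` S \<inter> {p. fst p = c} = map_prod f g ` (S \<inter> {p. fst p = inv f c})" for c
    using assms(1) by (force simp: bij_inv_eq_iff)
  moreover have "map_prod f g ` S \<inter> {p. snd p = c} = map_prod f g ` (S \<inter> {p. snd p = inv g c})" for c
    using assms(2) by (force simp: bij_inv_eq_iff)
  ultimately show ?thesis
    using assms(5) connected_continuous_image[OF cont]
    unfolding monotone_set_def x_monotone_def y_monotone_def by metis
qed

lemma infdist_image_isometry:
  assumes "\<And>x y. dist (T x) (T y) = dist x y"
  shows "infdist (T a) (T ` S) = infdist a S"
  unfolding infdist_def using assms by (simp add: image_image)

lemma dist_map_prod_isometry:
  assumes "\<And>x y. dist (f x) (f y) = dist x y" "\<And>x y. dist (g x) (g y) = dist x y"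
  shows "dist (map_prod f g p) (map_prod f g q) = dist p q"
  by (cases p, cases q) (simp add: dist_Pair_Pair assms)

lemma mem_image_involution_iff:
  assumes "\<And>x. T (T x) = x"
  shows "x \<in> T ` A \<longleftrightarrow> T x \<in> A"
  using assms by (metis image_iff)

abbreviation reflect_x :: "pt \<Rightarrow> pt" where "reflect_x \<equiv> map_prod uminus id"

abbreviation reflect_y :: "pt \<Rightarrow> pt" where "reflect_y \<equiv> map_prod id uminus"

lemma reflect_x_involution [simp]: "reflect_x (reflect_x p) = p"
  by (cases p) simp

lemma reflect_y_involution [simp]: "reflect_y (reflect_y p) = p"
  by (cases p) simp

lemma below_y_reflect_x:
  "below_y (reflect_x a) (reflect_x ` S) \<longleftrightarrow> below_y a S"
  unfolding below_y_def by auto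

lemma below_y_reflect_y:
  "below_y (reflect_y a) (reflect_y ` S) \<longleftrightarrow> above_y a S"
  unfolding below_y_def above_y_def by auto

lemma offset_minus_reflect_x:
  "offset_minus (reflect_x ` S) \<delta> = reflect_x ` offset_minus S \<delta>"
proof -
  have "a \<in> offset_minus (reflect_x ` S) \<delta> \<longleftrightarrow> reflect_x a \<in> offset_minus S \<delta>" for a
    using below_y_reflect_x[of "reflect_x a" S]
      infdist_image_isometry[OF dist_map_prod_isometry[OF dist_minus], of id "reflect_x a" S]
    unfolding offset_minus_def by simp
  then show ?thesis by (auto simp: mem_image_involution_iff)
qed

lemma offset_minus_reflect_y:
  "offset_minus (reflect_y ` S) \<delta> = reflect_y ` offset_plus S \<delta>"
proof -
  have "a \<in> offset_minus (reflect_y ` S) \<delta> \<longleftrightarrow> reflect_y a \<in> offset_plus S \<delta>" for a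
    using below_y_reflect_y[of "reflect_y a" S]
      infdist_image_isometry[OF dist_map_prod_isometry[OF _ dist_minus], of id "reflect_y a" S]
    unfolding offset_minus_def offset_plus_def by simp
  then show ?thesis by (auto simp: mem_image_involution_iff)
qed

lemma dec_chain_reflect_x: "dec_chain S \<Longrightarrow> inc_chain (reflect_x ` S)"
  unfolding dec_chain_def inc_chain_def by auto

lemma inc_chain_reflect_y: "inc_chain S \<Longrightarrow> dec_chain (reflect_y ` S)"
  unfolding dec_chain_def inc_chain_def by auto

lemma dec_chain_reflect_y: "dec_chain S \<Longrightarrow> inc_chain (reflect_y ` S)"
  unfolding dec_chain_def inc_chain_def by auto

lemma monotone_set_reflect_x: "monotone_set S \<Longrightarrow> monotone_set (reflect_x ` S)"
  by (rule monotone_set_map_prod) (auto simp: bij_uminus intro: continuous_intros)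

lemma monotone_set_reflect_y: "monotone_set S \<Longrightarrow> monotone_set (reflect_y ` S)"
  by (rule monotone_set_map_prod) (auto simp: bij_uminus intro: continuous_intros)

lemma inc_chain_offset_minus_monotone:
  "inc_chain S \<Longrightarrow> connected S \<Longrightarrow> monotone_set (offset_minus S \<delta>)"
  unfolding monotone_set_def
  using inc_chain_offset_minus_x_monotone inc_chain_offset_minus_y_monotone by blast

lemma chain_offset_minus_monotone:
  assumes "connected S" "inc_chain S \<or> dec_chain S"
  shows "monotone_set (offset_minus S \<delta>)"
  using assms(2)
proof
  assume "dec_chain S"
  moreover have "connected (reflect_x ` S)"
    using assms(1) by (intro connected_continuous_image continuous_on_map_prod continuous_intros)
  ultimately have "monotone_set (offset_minus (reflect_x ` S) \<delta>)"
    by (intro inc_chain_offset_minus_monotone dec_chain_reflect_x)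
  then have "monotone_set (reflect_x ` reflect_x ` offset_minus S \<delta>)"
    unfolding offset_minus_reflect_x by (rule monotone_set_reflect_x)
  then show ?thesis by (simp add: image_image)
qed (use assms(1) inc_chain_offset_minus_monotone in blast)

lemma chain_offset_plus_monotone:
  assumes "connected S" "inc_chain S \<or> dec_chain S"
  shows "monotone_set (offset_plus S \<delta>)"
proof -
  have "connected (reflect_y ` S)"
    using assms(1) by (intro connected_continuous_image continuous_on_map_prod continuous_intros)
  moreover have "inc_chain (reflect_y ` S) \<or> dec_chain (reflect_y ` S)"
    using assms(2) inc_chain_reflect_y dec_chain_reflect_y by blast
  ultimately have "monotone_set (reflect_y ` offset_plus S \<delta>)"
    using chain_offset_minus_monotone by (simp flip: offset_minus_reflect_y)
  then have "monotone_set (reflect_y ` reflect_y ` offset_plus S \<delta>)"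
    by (rule monotone_set_reflect_y)
  then show ?thesis by (simp add: image_image)
qed

theorem lemma9:
  fixes e :: "(real \<times> real) set" and \<delta> :: real
  assumes "is_curve e" and "\<delta> > 0"
  shows "monotone_set (offset_minus e \<delta>) \<and> monotone_set (offset_plus e \<delta>)"
proof -
  obtain \<gamma> :: "real \<Rightarrow> pt"
    where \<gamma>: "continuous_on {0<..<1} \<gamma>" "inj_on \<gamma> {0<..<1}" and e: "e = \<gamma> ` {0<..<1}"
    using assms(1) unfolding is_curve_def pw_algebraic_open_arc_def by blast
  have "connected e"
    unfolding e by (rule connected_continuous_image[OF \<gamma>(1) connected_Ioo])
  have "mono_on {0<..<1} (g \<circ> \<gamma>) \<or> antimono_on {0<..<1} (g \<circ> \<gamma>)"
    if g: "g = fst \<or> g = snd" for g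
  proof (rule continuous_injective_mono_on_or_antimono_on[OF _ \<gamma>])
    show "is_interval {0<..<1::real}" by (simp add: is_interval_connected_1)
    show "continuous_on (\<gamma> ` {0<..<1}) g" using g by (auto intro: continuous_intros)
    show "connected (\<gamma> ` {0<..<1} \<inter> {p. g p = c})" for c
      using assms(1) g unfolding e is_curve_def x_monotone_def y_monotone_def by blast
    show "finite {c. infinite (\<gamma> ` {0<..<1} \<inter> {p. g p = c})}"
      using assms(1) g unfolding e is_curve_def
      by (intro pw_algebraic_open_arc_finite_infinite_fibres) auto
  qed
  then have "inc_chain e \<or> dec_chain e"
    unfolding e by (intro monotone_coordinates_imp_chain) auto
  then show ?thesis
    using \<open>connected e\<close> chain_offset_minus_monotone chain_offset_plus_monotone by blast
qed

end
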